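(* Let $\Lambda$ be a finite $k$-graph with no sources, and let $\{t_\lambda\}_{\lambda\in\Lambda}$ be a purely atomic representation of $C^*(\Lambda)$ on a separable Hilbert space $\mathcal H$, with associated projection valued measure $P$, such that $t_\lambda t_\lambda^*\neq0$ for all $\lambda\in\Lambda$. Then the representation is monic if and only if for every atom $x\in\Lambda^\infty$ (i.e. $P(\{x\})\ne 0$) the projection $P(\{x\})$ has one-dimensional range. Moreover, in this case the Borel measure $\mu(B)=\langle P(B)\xi,\xi\rangle$ on $\Lambda^\infty$ determined by a cyclic vector $\xi$ for $\{t_\lambda t_\lambda^*\}_{\lambda\in\Lambda}$ is atomic.
   Context: A $k$-graph ($k\ge1$) is a countable small category $\Lambda$ with a functor $d:\Lambda\to\mathbb N^k$ satisfying unique factorization: if $d(\lambda)=m+n$ there are unique $\mu,\nu$ with $\lambda=\mu\nu$, $d(\mu)=m$, $d(\nu)=n$. $\Lambda^0$ = vertices, $r,s$ = range, source, $\Lambda^n=d^{-1}(n)$, $v\Lambda^n=\{\lambda\in\Lambda^n:r(\lambda)=v\}$; finite: each $\Lambda^n$ finite; no sources: each $v\Lambda^n$ nonempty. Infinite paths are degree-preserving functors $x:\Omega_k\to\Lambda$, where $\Omega_k$ has objects $\mathbb N^k$, morphisms $(p,q)$, $p\le q$, $d(p,q)=q-p$; $\Lambda^\infty$ is their set. Cylinder sets $Z(\lambda)=\{x:x(0,d(\lambda))=\lambda\}$ generate the Borel $\sigma$-algebra. A representation of $C^*(\Lambda)$ is a family of partial isometries $\{t_\lambda\}$ on a Hilbert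 space satisfying (CK1) $\{t_v\}$ mutually orthogonal projections, (CK2) $t_\lambda t_\eta=t_{\lambda\eta}$ when $s(\lambda)=r(\eta)$, (CK3) $t_\lambda^*t_\lambda=t_{s(\lambda)}$, (CK4) $t_v=\sum_{\lambda\in v\Lambda^n}t_\lambda t_\lambda^*$. Its projection valued measure $P$ on Borel sets of $\Lambda^\infty$ satisfies $P(Z(\lambda))=t_\lambda t_\lambda^*$. Purely atomic: there is a Borel $\Omega$ with $P(\Lambda^\infty\setminus\Omega)=0$, $P(\{x\})\ne0$ for $x\in\Omega$, $\sum_{x\in\Omega}P(\{x\})=\mathrm{Id}$ strongly. The representation is monic if $t_\lambda\neq0$ for all $\lambda$ and there is $\xi\in\mathcal H$ with $\overline{\mathrm{span}}\{t_\lambda t_\lambda^*\xi:\lambda\in\Lambda\}=\mathcal H$ (such $\xi$ is called cyclic). *)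

theory Defs
  imports "HOL-Analysis.Analysis"
begin

text \<open>The distribution has no complex Hilbert spaces, so we introduce them as a type class:
  a real normed vector space with a complex scalar multiplication extending the real one and a
  complex inner product (linear in the first argument) inducing the norm.\<close>

class complex_inner = real_normed_vector +
  fixes scaleC :: "complex \<Rightarrow> 'a \<Rightarrow> 'a"
    and cinner :: "'a \<Rightarrow> 'a \<Rightarrow> complex"
  assumes scaleC_add_right: "scaleC a (x + y) = scaleC a x + scaleC a y"
    and scaleC_add_left: "scaleC (a + b) x = scaleC a x + scaleC b x"
    and scaleC_scaleC: "scaleC a (scaleC b x) = scaleC (a * b) x"
    and scaleC_one: "scaleC 1 x = x"
    and scaleR_scaleC: "scaleR r x = scaleC (complex_of_real r) x"
    and cinner_commute: "cinner x y = cnj (cinner y x)"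
    and cinner_add_left: "cinner (x + y) z = cinner x z + cinner y z"
    and cinner_scaleC_left: "cinner (scaleC a x) y = a * cinner x y"
    and cinner_ge_zero: "0 \<le> Re (cinner x x)"
    and cinner_eq_zero_iff: "cinner x x = 0 \<longleftrightarrow> x = 0"
    and norm_eq_sqrt_cinner: "norm x = sqrt (Re (cinner x x))"

class chilbert_space = complex_inner + complete_space

definition separable_hspace :: "'h::metric_space itself \<Rightarrow> bool" where
  "separable_hspace _ \<longleftrightarrow> (\<exists>D::'h set. countable D \<and> closure D = UNIV)"

definition bounded_clinear :: "('h::complex_inner \<Rightarrow> 'h) \<Rightarrow> bool" where
  "bounded_clinear T \<longleftrightarrow> bounded_linear T \<and> (\<forall>a x. T (scaleC a x) = scaleC a (T x))"

definition adj :: "('h::complex_inner \<Rightarrow> 'h) \<Rightarrow> ('h \<Rightarrow> 'h)" where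
  "adj T = (THE S. \<forall>x y. cinner (T x) y = cinner x (S y))"

definition zero_op :: "'h::complex_inner \<Rightarrow> 'h" where
  "zero_op = (\<lambda>_. 0)"

definition is_proj :: "('h::complex_inner \<Rightarrow> 'h) \<Rightarrow> bool" where
  "is_proj P \<longleftrightarrow> bounded_clinear P \<and> P \<circ> P = P \<and> adj P = P"

definition partial_isometry :: "('h::complex_inner \<Rightarrow> 'h) \<Rightarrow> bool" where
  "partial_isometry T \<longleftrightarrow> bounded_clinear T \<and> is_proj (adj T \<circ> T)"

definition cspan :: "'h::complex_inner set \<Rightarrow> 'h set" where
  "cspan S = {y. \<exists>F c. finite F \<and> F \<subseteq> S \<and> y = (\<Sum>v\<in>F. scaleC (c v) v)}"

definition one_dimensional :: "'h::complex_inner set \<Rightarrow> bool" where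
  "one_dimensional V \<longleftrightarrow> (\<exists>v. v \<noteq> 0 \<and> V = {scaleC a v | a. True})"

text \<open>Degrees: \<open>\<nat>^k\<close> is represented by functions \<open>nat \<Rightarrow> nat\<close> vanishing from index k on;
  the order is the pointwise one.\<close>
definition degs :: "nat \<Rightarrow> (nat \<Rightarrow> nat) set" where
  "degs k = {n. \<forall>i\<ge>k. n i = 0}"

text \<open>A k-graph is given by its set of morphisms \<open>L\<close> (countable), range and source maps \<open>r s\<close>
  (objects are identified with their identity morphisms), a composition \<open>c\<close> and a degree map \<open>d\<close>.\<close>
definition kgraph ::
  "nat \<Rightarrow> 'a set \<Rightarrow> ('a \<Rightarrow> 'a) \<Rightarrow> ('a \<Rightarrow> 'a) \<Rightarrow> ('a \<Rightarrow> 'a \<Rightarrow> 'a) \<Rightarrow> ('a \<Rightarrow> nat \<Rightarrow> nat) \<Rightarrow> bool"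
where
  "kgraph k L r s c d \<longleftrightarrow>
     1 \<le> k \<and> countable L \<and>
     (\<forall>l\<in>L. r l \<in> L \<and> s l \<in> L \<and>
        r (r l) = r l \<and> s (r l) = r l \<and> r (s l) = s l \<and> s (s l) = s l \<and>
        c (r l) l = l \<and> c l (s l) = l) \<and>
     (\<forall>l\<in>L. \<forall>m1\<in>L. s l = r m1 \<longrightarrow>
        c l m1 \<in> L \<and> r (c l m1) = r l \<and> s (c l m1) = s m1) \<and>
     (\<forall>l\<in>L. \<forall>m1\<in>L. \<forall>n1\<in>L. s l = r m1 \<longrightarrow> s m1 = r n1 \<longrightarrow>
        c (c l m1) n1 = c l (c m1 n1)) \<and>
     (\<forall>l\<in>L. d l \<in> degs k) \<and>
     (\<forall>l\<in>L. \<forall>m1\<in>L. s l = r m1 \<longrightarrow> d (c l m1) = (\<lambda>i. d l i + d m1 i)) \<and>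
     (\<forall>l\<in>L. \<forall>m n. d l = (\<lambda>i. m i + n i) \<longrightarrow>
        (\<exists>!p. fst p \<in> L \<and> snd p \<in> L \<and> s (fst p) = r (snd p) \<and> c (fst p) (snd p) = l \<and>
              d (fst p) = m \<and> d (snd p) = n))"

definition vertices :: "'a set \<Rightarrow> ('a \<Rightarrow> 'a) \<Rightarrow> 'a set" where
  "vertices L r = r ` L"

definition kgraph_finite :: "nat \<Rightarrow> 'a set \<Rightarrow> ('a \<Rightarrow> nat \<Rightarrow> nat) \<Rightarrow> bool" where
  "kgraph_finite k L d \<longleftrightarrow> (\<forall>n\<in>degs k. finite {l\<in>L. d l = n})"

definition no_sources :: "nat \<Rightarrow> 'a set \<Rightarrow> ('a \<Rightarrow> 'a) \<Rightarrow> ('a \<Rightarrow> nat \<Rightarrow> nat) \<Rightarrow> bool" where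
  "no_sources k L r d \<longleftrightarrow> (\<forall>v\<in>vertices L r. \<forall>n\<in>degs k. \<exists>l\<in>L. r l = v \<and> d l = n)"

text \<open>Infinite paths: degree preserving functors \<open>\<Omega>_k \<rightarrow> \<Lambda>\<close>; the morphism \<open>(p,q)\<close> of \<open>\<Omega>_k\<close>
  (\<open>p \<le> q\<close>) is sent to \<open>x p q\<close>, the object \<open>p\<close> to the identity \<open>x p p\<close>. Outside the
  morphisms of \<open>\<Omega>_k\<close> the function is \<open>undefined\<close> (extensionality).\<close>
definition kpaths ::
  "nat \<Rightarrow> 'a set \<Rightarrow> ('a \<Rightarrow> 'a) \<Rightarrow> ('a \<Rightarrow> 'a) \<Rightarrow> ('a \<Rightarrow> 'a \<Rightarrow> 'a) \<Rightarrow> ('a \<Rightarrow> nat \<Rightarrow> nat)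
   \<Rightarrow> ((nat \<Rightarrow> nat) \<Rightarrow> (nat \<Rightarrow> nat) \<Rightarrow> 'a) set"
where
  "kpaths k L r s c d =
     {x. (\<forall>p\<in>degs k. \<forall>q\<in>degs k. p \<le> q \<longrightarrow>
            x p q \<in> L \<and> d (x p q) = (\<lambda>i. q i - p i) \<and> r (x p q) = x p p \<and> s (x p q) = x q q) \<and>
         (\<forall>p\<in>degs k. \<forall>q\<in>degs k. \<forall>w\<in>degs k. p \<le> q \<longrightarrow> q \<le> w \<longrightarrow> x p w = c (x p q) (x q w)) \<and>
         (\<forall>p q. \<not> (p \<in> degs k \<and> q \<in> degs k \<and> p \<le> q) \<longrightarrow> x p q = undefined)}"

definition cylinder ::
  "nat \<Rightarrow> 'a set \<Rightarrow> ('a \<Rightarrow> 'a) \<Rightarrow> ('a \<Rightarrow> 'a) \<Rightarrow> ('a \<Rightarrow> 'a \<Rightarrow> 'a) \<Rightarrow> ('a \<Rightarrow> nat \<Rightarrow> nat) \<Rightarrow> 'a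
   \<Rightarrow> ((nat \<Rightarrow> nat) \<Rightarrow> (nat \<Rightarrow> nat) \<Rightarrow> 'a) set"
where
  "cylinder k L r s c d l = {x \<in> kpaths k L r s c d. x (\<lambda>_. 0) (d l) = l}"

definition kpath_borel ::
  "nat \<Rightarrow> 'a set \<Rightarrow> ('a \<Rightarrow> 'a) \<Rightarrow> ('a \<Rightarrow> 'a) \<Rightarrow> ('a \<Rightarrow> 'a \<Rightarrow> 'a) \<Rightarrow> ('a \<Rightarrow> nat \<Rightarrow> nat)
   \<Rightarrow> ((nat \<Rightarrow> nat) \<Rightarrow> (nat \<Rightarrow> nat) \<Rightarrow> 'a) set set"
where
  "kpath_borel k L r s c d =
     sigma_sets (kpaths k L r s c d) {cylinder k L r s c d l | l. l \<in> L}"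

definition ck_rep ::
  "nat \<Rightarrow> 'a set \<Rightarrow> ('a \<Rightarrow> 'a) \<Rightarrow> ('a \<Rightarrow> 'a) \<Rightarrow> ('a \<Rightarrow> 'a \<Rightarrow> 'a) \<Rightarrow> ('a \<Rightarrow> nat \<Rightarrow> nat)
   \<Rightarrow> ('a \<Rightarrow> 'h::chilbert_space \<Rightarrow> 'h) \<Rightarrow> bool"
where
  "ck_rep k L r s c d t \<longleftrightarrow>
     (\<forall>l\<in>L. partial_isometry (t l)) \<and>
     \<comment> \<open>(CK1)\<close>
     (\<forall>v\<in>vertices L r. is_proj (t v)) \<and>
     (\<forall>v\<in>vertices L r. \<forall>w\<in>vertices L r. v \<noteq> w \<longrightarrow> t v \<circ> t w = zero_op) \<and>
     \<comment> \<open>(CK2)\<close>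
     (\<forall>l\<in>L. \<forall>e1\<in>L. s l = r e1 \<longrightarrow> t l \<circ> t e1 = t (c l e1)) \<and>
     \<comment> \<open>(CK3)\<close>
     (\<forall>l\<in>L. adj (t l) \<circ> t l = t (s l)) \<and>
     \<comment> \<open>(CK4)\<close>
     (\<forall>v\<in>vertices L r. \<forall>n\<in>degs k. \<forall>h.
        t v h = (\<Sum>l\<in>{l\<in>L. r l = v \<and> d l = n}. t l (adj (t l) h)))"

definition pvm :: "'p set \<Rightarrow> 'p set set \<Rightarrow> ('p set \<Rightarrow> 'h::chilbert_space \<Rightarrow> 'h) \<Rightarrow> bool" where
  "pvm X A P \<longleftrightarrow>
     (\<forall>B\<in>A. is_proj (P B)) \<and> P {} = zero_op \<and> P X = id \<and>
     (\<forall>B\<in>A. \<forall>C\<in>A. P (B \<inter> C) = P B \<circ> P C) \<and>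
     (\<forall>F. range F \<subseteq> A \<longrightarrow> disjoint_family F \<longrightarrow>
        (\<forall>h. (\<lambda>n. P (F n) h) sums P (\<Union>n. F n) h))"

definition purely_atomic :: "'p set \<Rightarrow> 'p set set \<Rightarrow> ('p set \<Rightarrow> 'h::chilbert_space \<Rightarrow> 'h) \<Rightarrow> bool" where
  "purely_atomic X A P \<longleftrightarrow>
     (\<exists>\<Omega>\<in>A. P (X - \<Omega>) = zero_op \<and> (\<forall>x\<in>\<Omega>. P {x} \<noteq> zero_op) \<and>
        (\<forall>h. ((\<lambda>x. P {x} h) has_sum h) \<Omega>))"

definition cyclic_vector :: "'a set \<Rightarrow> ('a \<Rightarrow> 'h::chilbert_space \<Rightarrow> 'h) \<Rightarrow> 'h \<Rightarrow> bool" where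
  "cyclic_vector L t \<xi> \<longleftrightarrow> closure (cspan {t l (adj (t l) \<xi>) | l. l \<in> L}) = UNIV"

definition monic_rep :: "'a set \<Rightarrow> ('a \<Rightarrow> 'h::chilbert_space \<Rightarrow> 'h) \<Rightarrow> bool" where
  "monic_rep L t \<longleftrightarrow> (\<forall>l\<in>L. t l \<noteq> zero_op) \<and> (\<exists>\<xi>. cyclic_vector L t \<xi>)"

definition atomic_measure :: "'p measure \<Rightarrow> bool" where
  "atomic_measure M \<longleftrightarrow>
     (\<exists>\<Omega>\<in>sets M. emeasure M (space M - \<Omega>) = 0 \<and>
        (\<forall>x\<in>\<Omega>. {x} \<in> sets M \<and> emeasure M {x} \<noteq> 0))"

definition vector_measure :: "'p set \<Rightarrow> 'p set set \<Rightarrow> ('p set \<Rightarrow> 'h::chilbert_space \<Rightarrow> 'h) \<Rightarrow> 'h \<Rightarrow> 'p measure" where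
  "vector_measure X A P \<xi> = measure_of X A (\<lambda>B. ennreal (Re (cinner (P B \<xi>) \<xi>)))"

end

theory Submission
  imports Defs
begin

text \<open>Let \<open>\<xi>\<close> be cyclic. Since \<open>P{x} P(Z(\<lambda>)) = P({x} \<inter> Z(\<lambda>))\<close> is \<open>P{x}\<close> or \<open>0\<close>, the
  projection \<open>P{x}\<close> maps the span of the vectors \<open>P(Z(\<lambda>))\<xi>\<close> into the line through
  \<open>P{x}\<xi>\<close>; by density and closedness of that line its whole range lies there, so every atom
  has one-dimensional range, and \<open>\<mu>{x} = \<parallel>P{x}\<xi>\<parallel>\<^sup>2 > 0\<close> makes \<open>\<mu>\<close> atomic.
  Conversely, if all atoms have one-dimensional range, separability forces the set of atoms to be
  countable, and a weighted sum \<open>\<xi> = \<Sum> 2\<^sup>-\<^sup>n v\<^sub>n\<close> of unit vectors in the ranges satisfies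
  \<open>P{x}\<xi> \<noteq> 0\<close> for each atom. The cylinders of the initial segments of \<open>x\<close> decrease to
  \<open>{x}\<close>, so \<open>P{x}\<xi>\<close> is a limit of vectors \<open>P(Z(\<lambda>))\<xi>\<close>; as every vector is the sum of its
  components \<open>P{x}h \<in> \<complex> P{x}\<xi>\<close>, the vector \<open>\<xi>\<close> is cyclic.\<close>

section \<open>Complex inner product spaces\<close>

context chilbert_space begin
subclass banach by standard
end

lemma scaleC_zero_left [simp]: "scaleC 0 x = (0::'h::complex_inner)"
proof -
  have "scaleC 0 x = scaleC 0 x + scaleC 0 (x::'h)" using scaleC_add_left[of 0 0 x] by simp
  then show ?thesis by simp
qed

lemma scaleC_zero_right [simp]: "scaleC a 0 = (0::'h::complex_inner)"
proof -
  have "scaleC a 0 = scaleC a 0 + scaleC a (0::'h)" using scaleC_add_right[of a 0 0] by simp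
  then show ?thesis by simp
qed

lemma scaleC_sum_left: "scaleC (\<Sum>i\<in>F. a i) w = (\<Sum>i\<in>F. scaleC (a i) (w::'h::complex_inner))"
  by (induction F rule: infinite_finite_induct) (auto simp: scaleC_add_left)

lemma cinner_add_right: "cinner x (y + z) = cinner x y + cinner (x::'h::complex_inner) z"
  by (metis cinner_commute cinner_add_left complex_cnj_add)

lemma cinner_scaleC_right: "cinner x (scaleC a y) = cnj a * cinner (x::'h::complex_inner) y"
  by (metis cinner_commute cinner_scaleC_left complex_cnj_mult)

lemma cinner_diff_left: "cinner (x - y) z = cinner x z - cinner (y::'h::complex_inner) z"
  using cinner_add_left[of "x - y" y z] by simp

lemma cinner_diff_right: "cinner x (y - z) = cinner x y - cinner (x::'h::complex_inner) z"
  by (metis cinner_commute cinner_diff_left complex_cnj_diff)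

lemma cinner_zero_left [simp]: "cinner 0 (y::'h::complex_inner) = 0"
  using cinner_add_left[of 0 0 y] by simp

lemma cinner_zero_right [simp]: "cinner (x::'h::complex_inner) 0 = 0"
  by (metis cinner_commute cinner_zero_left complex_cnj_zero)

lemma cinner_sum_left: "cinner (\<Sum>i\<in>F. f i) y = (\<Sum>i\<in>F. cinner (f i) (y::'h::complex_inner))"
  by (induction F rule: infinite_finite_induct) (auto simp: cinner_add_left)

lemma power2_norm_eq_cinner: "(norm x)\<^sup>2 = Re (cinner x (x::'h::complex_inner))"
  using norm_eq_sqrt_cinner[of x] cinner_ge_zero[of x] by simp

lemma norm_scaleC: "norm (scaleC a x) = cmod a * norm (x::'h::complex_inner)"
proof -
  have "cinner (scaleC a x) (scaleC a x) = a * cnj a * cinner x x"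
    by (simp only: cinner_scaleC_left cinner_scaleC_right mult_ac)
  also have "\<dots> = (cmod a)\<^sup>2 *\<^sub>R cinner x x"
    by (simp only: complex_norm_square scaleR_conv_of_real)
  finally have "(norm (scaleC a x))\<^sup>2 = (cmod a * norm x)\<^sup>2"
    by (simp only: power2_norm_eq_cinner scaleR_complex.sel(1) power_mult_distrib)
  then show ?thesis by (simp add: power2_eq_iff_nonneg)
qed

lemma Re_cinner_polarization:
  "Re (cinner x y) = ((norm (x + y))\<^sup>2 - (norm (x - y))\<^sup>2) / 4" for x y :: "'h::complex_inner"
proof -
  have "Re (cinner y x) = Re (cinner x y)" using cinner_commute[of y x] by simp
  then show ?thesis
    by (simp add: power2_norm_eq_cinner cinner_add_left cinner_add_right
        cinner_diff_left cinner_diff_right)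
qed

lemma tendsto_Re_cinner:
  "(f \<longlongrightarrow> a) F \<Longrightarrow> ((\<lambda>z. Re (cinner (f z) (w::'h::complex_inner))) \<longlongrightarrow> Re (cinner a w)) F"
  unfolding Re_cinner_polarization by (intro tendsto_intros) simp_all

lemma tendsto_cinner_left:
  assumes "(f \<longlongrightarrow> a) F"
  shows "((\<lambda>z. cinner (f z) (w::'h::complex_inner)) \<longlongrightarrow> cinner a w) F"
proof -
  have Im: "Im (cinner x w) = Re (cinner x (scaleC \<i> w))" for x
    by (simp add: cinner_scaleC_right)
  show ?thesis
    unfolding tendsto_complex_iff Im using tendsto_Re_cinner[OF assms] by blast
qed

lemma sums_Re_cinner:
  "f sums a \<Longrightarrow> (\<lambda>n. Re (cinner (f n) (w::'h::complex_inner))) sums Re (cinner a w)"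
  unfolding sums_def by (drule tendsto_Re_cinner) (simp add: cinner_sum_left)

lemma bounded_linear_scaleC_right: "bounded_linear (scaleC a :: 'h::complex_inner \<Rightarrow> 'h)"
proof (rule bounded_linear_intro[where K = "cmod a"])
  fix x y :: 'h and b :: real
  show "scaleC a (x + y) = scaleC a x + scaleC a y" by (rule scaleC_add_right)
  show "scaleC a (b *\<^sub>R x) = b *\<^sub>R scaleC a x"
    by (simp add: scaleR_scaleC scaleC_scaleC mult.commute)
  show "norm (scaleC a x) \<le> norm x * cmod a" by (simp add: norm_scaleC mult.commute)
qed

lemma bounded_linear_scaleC_left: "bounded_linear (\<lambda>a. scaleC a (w::'h::complex_inner))"
proof (rule bounded_linear_intro[where K = "norm w"])
  fix a b :: complex and e :: real
  show "scaleC (a + b) w = scaleC a w + scaleC b w" by (rule scaleC_add_left)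
  show "scaleC (e *\<^sub>R a) w = e *\<^sub>R scaleC a w"
    by (simp add: scaleR_scaleC scaleC_scaleC scaleR_conv_of_real)
  show "norm (scaleC a w) \<le> norm a * norm w" by (simp add: norm_scaleC)
qed

lemma closed_complex_line: "closed {scaleC a (w::'h::complex_inner) | a. True}"
proof (cases "w = 0")
  case True
  then have "{scaleC a w | a. True} = {0}" by auto
  then show ?thesis by simp
next
  case False
  then have ww: "cinner w w \<noteq> 0" using cinner_eq_zero_iff by blast
  \<comment> \<open>the line is the fixed point set of the continuous orthogonal projection onto it\<close>
  have line_eq: "{scaleC a w | a. True} = {y. y = scaleC (cinner y w / cinner w w) w}"
  proof safe
    fix a show "scaleC a w = scaleC (cinner (scaleC a w) w / cinner w w) w"
      using ww by (simp add: cinner_scaleC_left)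
  qed auto
  have "continuous_on UNIV (\<lambda>y::'h. cinner y w / cinner w w)"
    unfolding continuous_on_def
    using ww by (intro ballI tendsto_intros tendsto_cinner_left tendsto_ident_at) auto
  then have "continuous_on UNIV (\<lambda>y::'h. scaleC (cinner y w / cinner w w) w)"
    using continuous_on_compose[OF _ linear_continuous_on[OF bounded_linear_scaleC_left[of w]]]
    by (simp add: o_def)
  then show ?thesis
    unfolding line_eq by (intro closed_Collect_eq continuous_on_id)
qed

lemma cspan_sum:
  assumes "finite F" "\<And>i. i \<in> F \<Longrightarrow> g i \<in> S"
  shows "(\<Sum>i\<in>F. scaleC (a i) (g i :: 'h::complex_inner)) \<in> cspan S"
proof -
  have "(\<Sum>i\<in>F. scaleC (a i) (g i)) = (\<Sum>v\<in>g ` F. \<Sum>i\<in>{i\<in>F. g i = v}. scaleC (a i) (g i))"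
    by (rule sum.image_gen[OF assms(1)])
  also have "\<dots> = (\<Sum>v\<in>g ` F. scaleC (\<Sum>i\<in>{i\<in>F. g i = v}. a i) v)"
    by (intro sum.cong refl) (simp add: scaleC_sum_left)
  finally have "(\<Sum>i\<in>F. scaleC (a i) (g i)) = (\<Sum>v\<in>g ` F. scaleC (\<Sum>i\<in>{i\<in>F. g i = v}. a i) v)" .
  moreover have "finite (g ` F)" "g ` F \<subseteq> S" using assms by auto
  ultimately show ?thesis
    unfolding cspan_def by (intro CollectI exI conjI)
qed

lemma bounded_clinear_closure_cspan_into_line:
  assumes T: "bounded_clinear T" and S: "T ` S \<subseteq> {scaleC a w | a. True}"
    and y: "y \<in> closure (cspan S)"
  shows "T y \<in> {scaleC a (w::'h::complex_inner) | a. True}"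
proof -
  have lin: "linear T" and scale: "T (scaleC a z) = scaleC a (T z)" for a z
    using T unfolding bounded_clinear_def by (simp_all add: bounded_linear.linear)
  have span: "T z \<in> {scaleC a w | a. True}" if z: "z \<in> cspan S" for z
  proof -
    obtain F e where F: "finite F" "F \<subseteq> S" "z = (\<Sum>v\<in>F. scaleC (e v) v)"
      using z unfolding cspan_def mem_Collect_eq by (elim exE conjE) (rule that)
    have "\<forall>v\<in>F. \<exists>b. T v = scaleC b w"
    proof
      fix v assume "v \<in> F"
      then have "T v \<in> {scaleC a w | a. True}" using F(2) S by (simp add: image_subset_iff subset_iff)
      then show "\<exists>b. T v = scaleC b w" by simp
    qed
    from bchoice[OF this] obtain b where b: "\<forall>v\<in>F. T v = scaleC (b v) w" ..
    have "T z = (\<Sum>v\<in>F. T (scaleC (e v) v))"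
      unfolding F(3) by (rule real_vector.linear_sum[OF lin])
    also have "\<dots> = (\<Sum>v\<in>F. scaleC (e v * b v) w)"
    proof (rule sum.cong)
      fix v assume "v \<in> F"
      then show "T (scaleC (e v) v) = scaleC (e v * b v) w" using b by (simp add: scale scaleC_scaleC)
    qed simp
    also have "\<dots> = scaleC (\<Sum>v\<in>F. e v * b v) w"
      by (rule scaleC_sum_left[symmetric])
    finally show ?thesis by blast
  qed
  obtain z where z: "\<And>n. z n \<in> cspan S" "z \<longlonglongrightarrow> y"
    using y unfolding closure_sequential by blast
  have "bounded_linear T" using T unfolding bounded_clinear_def by simp
  then have "(\<lambda>n. T (z n)) \<longlonglongrightarrow> T y" by (rule bounded_linear.tendsto[OF _ z(2)])
  then show ?thesis by (rule closed_sequentially[OF closed_complex_line, rotated]) (intro allI span z(1))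
qed

lemma one_dimensional_multiple:
  assumes "one_dimensional V" "w \<in> V" "w \<noteq> 0" "y \<in> V"
  shows "\<exists>a. y = scaleC a w"
proof -
  obtain v where v: "V = {scaleC a v | a. True}" using assms(1) unfolding one_dimensional_def by blast
  obtain b where b: "w = scaleC b v" using assms(2) v by blast
  obtain e where e: "y = scaleC e v" using assms(4) v by blast
  have "b \<noteq> 0" using assms(3) b by auto
  then have "y = scaleC (e / b) w" by (simp add: b e scaleC_scaleC)
  then show ?thesis ..
qed

section \<open>Projection valued measures\<close>

lemma adj_eqI:
  assumes "\<And>x y. cinner (T x) y = cinner x (S y)"
  shows "adj T = (S :: 'h::complex_inner \<Rightarrow> 'h)"
  unfolding adj_def
proof (rule the_equality)
  show "\<forall>x y. cinner (T x) y = cinner x (S y)" using assms by blast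
  fix S' assume S': "\<forall>x y. cinner (T x) y = cinner x (S' y)"
  show "S' = S"
  proof
    fix y
    have "cinner x (S' y - S y) = 0" for x
      using S' assms by (simp add: cinner_diff_right)
    then show "S' y = S y" using cinner_eq_zero_iff[of "S' y - S y"] by simp
  qed
qed

lemma adj_eq_undefined:
  assumes "\<nexists>S. \<forall>x y. cinner (T x) y = cinner x (S y)"
  shows "adj T = (THE S :: 'h::complex_inner \<Rightarrow> 'h. False)"
proof -
  have "(\<lambda>S. \<forall>x y. cinner (T x) y = cinner x (S y)) = (\<lambda>_. False)"
    by (rule ext) (use assms in blast)
  then show ?thesis unfolding adj_def by simp
qed

lemma is_proj_cinner_commute:
  assumes "is_proj T" "\<exists>S. \<forall>x y. cinner (T x) y = cinner x (S y)"
  shows "cinner (T x) y = cinner x (T y)"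
proof -
  obtain S where S: "\<And>x y. cinner (T x) y = cinner x (S y)" using assms(2) by blast
  have "adj T = T" using assms(1) unfolding is_proj_def by simp
  then show ?thesis using adj_eqI[OF S] S by simp
qed

locale pvm_space =
  fixes X :: "'p set" and A :: "'p set set" and P :: "'p set \<Rightarrow> 'h::chilbert_space \<Rightarrow> 'h"
  assumes pvm: "pvm X A P" and sigma_algebra_A: "sigma_algebra X A"
begin

sublocale sigma_algebra X A by (rule sigma_algebra_A)

lemma is_proj_P: "B \<in> A \<Longrightarrow> is_proj (P B)"
  using pvm unfolding pvm_def by blast

lemma bounded_clinear_P: "B \<in> A \<Longrightarrow> bounded_clinear (P B)"
  using is_proj_P unfolding is_proj_def by blast

lemma bounded_linear_P: "B \<in> A \<Longrightarrow> bounded_linear (P B)"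
  using bounded_clinear_P unfolding bounded_clinear_def by blast

lemma P_scaleC: "B \<in> A \<Longrightarrow> P B (scaleC a h) = scaleC a (P B h)"
  using is_proj_P unfolding is_proj_def bounded_clinear_def by blast

lemma P_scaleR: "B \<in> A \<Longrightarrow> P B (e *\<^sub>R h) = e *\<^sub>R P B h"
  by (simp add: scaleR_scaleC P_scaleC)

lemma P_empty [simp]: "P {} h = 0"
  using pvm unfolding pvm_def zero_op_def by simp

lemma P_space [simp]: "P X h = h"
  using pvm unfolding pvm_def by simp

lemma P_Int: "B \<in> A \<Longrightarrow> C \<in> A \<Longrightarrow> P B (P C h) = P (B \<inter> C) h"
  using pvm unfolding pvm_def by (metis comp_apply)

lemma P_idem: "B \<in> A \<Longrightarrow> P B (P B h) = P B h"
  by (simp add: P_Int)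

lemma P_sums:
  "range F \<subseteq> A \<Longrightarrow> disjoint_family F \<Longrightarrow> (\<lambda>n. P (F n) h) sums P (\<Union>n. F n) h"
  using pvm unfolding pvm_def by blast

lemma P_Un:
  assumes "B \<in> A" "C \<in> A" "B \<inter> C = {}"
  shows "P (B \<union> C) h = P B h + P C h"
proof -
  have "range (binaryset B C) \<subseteq> A" using assms by (simp add: range_binaryset_eq)
  moreover have "disjoint_family (binaryset B C)"
    using assms(3) by (auto simp: disjoint_family_on_def binaryset_def)
  ultimately have "(\<lambda>n. P (binaryset B C n) h) sums P (B \<union> C) h"
    using P_sums UN_binaryset_eq by metis
  moreover have "(\<lambda>n. P (binaryset B C n) h) sums (P B h + P C h)"
    by (rule binaryset_sums[where f = "\<lambda>B. P B h"]) simp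
  ultimately show ?thesis by (rule sums_unique2)
qed

lemma P_Diff:
  assumes "B \<in> A" "C \<in> A" "C \<subseteq> B"
  shows "P (B - C) h = P B h - P C h"
proof -
  have "B - C \<in> A" "(B - C) \<inter> C = {}" "(B - C) \<union> C = B" using assms by auto
  then have "P B h = P (B - C) h + P C h" using P_Un[of "B - C" C h] assms(2) by simp
  then show ?thesis by (simp add: algebra_simps)
qed

lemma cinner_P_commute:
  assumes B: "B \<in> A"
  shows "cinner (P B x) y = cinner x (P B y)"
proof -
  have XB: "X - B \<in> A" using B by blast
  \<comment> \<open>\<open>adj (P C) = P C\<close> only says something if \<open>P C\<close> has an adjoint; otherwise \<open>P C\<close> equals the
    junk value \<open>THE S. False\<close>, which cannot happen for both \<open>B\<close> and its complement\<close>
  have undefined_P: "P C = (THE S. False)"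
    if "C \<in> A" "\<nexists>S. \<forall>x y. cinner (P C x) y = cinner x (S y)" for C
    using adj_eq_undefined[OF that(2)] is_proj_P[OF that(1)] unfolding is_proj_def by simp
  consider (has_adj) "\<exists>S. \<forall>x y. cinner (P B x) y = cinner x (S y)"
    | (compl_has_adj) "\<exists>S. \<forall>x y. cinner (P (X - B) x) y = cinner x (S y)"
    | (neither) "P B = P (X - B)"
    using undefined_P[OF B] undefined_P[OF XB] by metis
  then show ?thesis
  proof cases
    case has_adj
    then show ?thesis using is_proj_cinner_commute is_proj_P[OF B] by blast
  next
    case compl_has_adj
    then have "cinner (P (X - B) u) v = cinner u (P (X - B) v)" for u v
      using is_proj_cinner_commute is_proj_P[OF XB] by blast
    moreover have "P B h = h - P (X - B) h" for h
      using P_Diff[OF top B, of h] B sets_into_space by simp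
    ultimately show ?thesis by (simp add: cinner_diff_left cinner_diff_right)
  next
    case neither
    have "P B h = 0" for h
    proof -
      have "P B h = P B (P (X - B) h)" using P_idem[OF B] neither by simp
      also have "\<dots> = 0" using P_Int[OF B XB] by simp
      finally show ?thesis .
    qed
    then show ?thesis by simp
  qed
qed

lemma Re_cinner_P: "B \<in> A \<Longrightarrow> Re (cinner (P B h) h) = (norm (P B h))\<^sup>2"
  using cinner_P_commute[of B "P B h" h] by (simp add: P_idem power2_norm_eq_cinner)

lemma emeasure_vector_measure:
  assumes "B \<in> A"
  shows "emeasure (vector_measure X A P h) B = ennreal ((norm (P B h))\<^sup>2)"
proof -
  have additive: "countably_additive A (\<lambda>B. ennreal (Re (cinner (P B h) h)))"
    unfolding countably_additive_def
  proof (intro allI impI)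
    fix F :: "nat \<Rightarrow> 'p set" assume F: "range F \<subseteq> A" "disjoint_family F" "(\<Union>i. F i) \<in> A"
    have sums: "(\<lambda>i. Re (cinner (P (F i) h) h)) sums Re (cinner (P (\<Union>i. F i) h) h)"
      by (rule sums_Re_cinner[OF P_sums[OF F(1,2)]])
    have "0 \<le> Re (cinner (P (F i) h) h)" for i
      unfolding Re_cinner_P[OF range_subsetD[OF F(1)]] by (rule zero_le_power2)
    then have "(\<Sum>i. ennreal (Re (cinner (P (F i) h) h))) = ennreal (\<Sum>i. Re (cinner (P (F i) h) h))"
      by (rule suminf_ennreal2[OF _ sums_summable[OF sums]])
    then show "(\<Sum>i. ennreal (Re (cinner (P (F i) h) h))) = ennreal (Re (cinner (P (\<Union>i. F i) h) h))"
      by (simp only: sums_unique[OF sums])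
  qed
  have "positive A (\<lambda>B. ennreal (Re (cinner (P B h) h)))"
    by (simp add: positive_def)
  then have "emeasure (vector_measure X A P h) B = ennreal (Re (cinner (P B h) h))"
    unfolding vector_measure_def by (rule emeasure_measure_of_sigma[OF sigma_algebra_A _ additive assms])
  then show ?thesis by (simp only: Re_cinner_P[OF assms])
qed

lemma sets_vector_measure [simp]: "sets (vector_measure X A P h) = A"
  unfolding vector_measure_def sets_measure_of[OF space_closed] by (rule sigma_sets_eq)

lemma space_vector_measure [simp]: "space (vector_measure X A P h) = X"
  unfolding vector_measure_def space_measure_of[OF space_closed] ..

lemma finite_measure_vector_measure: "finite_measure (vector_measure X A P h)"
  by (rule finite_measureI) (simp add: emeasure_vector_measure)

lemma measure_vector_measure:
  "B \<in> A \<Longrightarrow> measure (vector_measure X A P h) B = (norm (P B h))\<^sup>2"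
  by (simp add: measure_def emeasure_vector_measure)

lemma P_decseq_tendsto:
  assumes B: "range B \<subseteq> A" "decseq B"
  shows "(\<lambda>n. P (B n) h) \<longlonglongrightarrow> P (\<Inter>n. B n) h"
proof -
  define D where "D n = B n - (\<Inter>n. B n)" for n
  have B_A: "B n \<in> A" for n using B(1) by (simp add: image_subset_iff)
  have Inter_B: "(\<Inter>n. B n) \<in> A" by (rule countable_INT) (simp_all add: B(1))
  have D: "D n \<in> A" for n unfolding D_def using B_A Inter_B by (rule Diff)
  have "decseq D" using B(2) unfolding D_def decseq_def by (simp add: Diff_mono)
  moreover have "(\<Inter>n. D n) = {}" unfolding D_def by simp
  \<comment> \<open>continuity from above of the finite measure \<open>B \<mapsto> \<parallel>P(B)h\<parallel>\<^sup>2\<close>\<close>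
  ultimately have "(\<lambda>n. measure (vector_measure X A P h) (D n)) \<longlonglongrightarrow> 0"
    using finite_measure.finite_Lim_measure_decseq[OF finite_measure_vector_measure, of D h] D
    by (simp add: image_subset_iff)
  then have "(\<lambda>n. norm (P (D n) h)) \<longlonglongrightarrow> 0"
    by (simp add: measure_vector_measure[OF D])
  then have "(\<lambda>n. P (D n) h) \<longlonglongrightarrow> 0"
    by (rule tendsto_norm_zero_cancel)
  then have "(\<lambda>n. P (D n) h + P (\<Inter>n. B n) h) \<longlonglongrightarrow> 0 + P (\<Inter>n. B n) h"
    by (rule tendsto_add) simp
  moreover have "P (B n) h = P (D n) h + P (\<Inter>n. B n) h" for n
    using P_Diff[OF B_A Inter_B, of n h] unfolding D_def by (simp add: INT_lower)
  ultimately show ?thesis by simp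
qed

lemma countable_atoms:
  assumes "separable_hspace TYPE('h)" and atoms: "\<And>x. x \<in> \<Omega> \<Longrightarrow> {x} \<in> A \<and> P {x} \<noteq> zero_op"
  shows "countable \<Omega>"
proof -
  obtain D :: "'h set" where D: "countable D" "closure D = UNIV"
    using assms(1) unfolding separable_hspace_def by blast
  have "\<Omega> \<subseteq> (\<Union>h\<in>D. {x. measure (vector_measure X A P h) {x} \<noteq> 0})"
  proof
    fix x assume x: "x \<in> \<Omega>"
    have "\<exists>h\<in>D. P {x} h \<noteq> 0"
    proof (rule ccontr)
      assume none: "\<not> (\<exists>h\<in>D. P {x} h \<noteq> 0)"
      have "P {x} h = 0" for h
      proof (rule continuous_constant_on_closure[of D "P {x}" 0 h])
        show "continuous_on (closure D) (P {x})"
          using atoms[OF x] by (intro linear_continuous_on bounded_linear_P) simp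
        show "P {x} y = 0" if "y \<in> D" for y using none that by blast
        show "h \<in> closure D" using D(2) by simp
      qed
      then have "P {x} = zero_op" unfolding zero_op_def by (rule ext)
      then show False using atoms[OF x] by simp
    qed
    then obtain h where "h \<in> D" "P {x} h \<noteq> 0" ..
    moreover have "measure (vector_measure X A P h) {x} = (norm (P {x} h))\<^sup>2"
      using atoms[OF x] by (simp add: measure_vector_measure)
    ultimately show "x \<in> (\<Union>h\<in>D. {x. measure (vector_measure X A P h) {x} \<noteq> 0})"
      by (intro UN_I[of h]) simp_all
  qed
  moreover have "countable (\<Union>h\<in>D. {x. measure (vector_measure X A P h) {x} \<noteq> 0})"
    by (rule Countable_Set.countable_UN[OF D(1)])
      (rule finite_measure.countable_support[OF finite_measure_vector_measure])
  ultimately show ?thesis by (rule countable_subset)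
qed

lemma exists_atom_vectors:
  assumes atoms: "\<And>x. x \<in> \<Omega> \<Longrightarrow> {x} \<in> A \<and> P {x} \<noteq> zero_op"
  shows "\<exists>v. \<forall>x\<in>\<Omega>. v x \<noteq> 0 \<and> (\<forall>y\<in>\<Omega>. P {y} (v x) = (if x = y then v x else 0))"
proof -
  define u where "u x = (SOME u. P {x} u \<noteq> 0)" for x
  have u: "P {x} (u x) \<noteq> 0" if "x \<in> \<Omega>" for x
    unfolding u_def by (rule someI_ex) (use atoms[OF that] in \<open>simp add: zero_op_def fun_eq_iff\<close>)
  have "P {y} (P {x} (u x)) = (if x = y then P {x} (u x) else 0)" if "x \<in> \<Omega>" "y \<in> \<Omega>" for x y
    using P_Int[of "{y}" "{x}" "u x"] atoms[OF that(1)] atoms[OF that(2)]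
    by (cases "x = y") simp_all
  with u show ?thesis by (intro exI[of _ "\<lambda>x. P {x} (u x)"]) simp
qed

lemma exists_vector_nonzero_on_atoms:
  assumes "countable \<Omega>" and atoms: "\<And>x. x \<in> \<Omega> \<Longrightarrow> {x} \<in> A \<and> P {x} \<noteq> zero_op"
  shows "\<exists>\<xi>. \<forall>x\<in>\<Omega>. P {x} \<xi> \<noteq> 0"
proof (cases "\<Omega> = {}")
  case True
  then show ?thesis by simp
next
  case False
  define e where "e = from_nat_into \<Omega>"
  have e: "e n \<in> \<Omega>" for n using False unfolding e_def by (rule from_nat_into)
  obtain v where v: "\<And>x. x \<in> \<Omega> \<Longrightarrow> v x \<noteq> 0"
    and P_v: "\<And>x y. x \<in> \<Omega> \<Longrightarrow> y \<in> \<Omega> \<Longrightarrow> P {y} (v x) = (if x = y then v x else 0)"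
    using exists_atom_vectors[OF atoms] by metis
  define a where "a n = (1/2)^n / norm (v (e n))" for n
  define \<xi> where "\<xi> = (\<Sum>n. a n *\<^sub>R v (e n))"
  have "norm (a n *\<^sub>R v (e n)) = (1/2)^n" for n
    using v[OF e] unfolding a_def by simp
  then have summable: "summable (\<lambda>n. a n *\<^sub>R v (e n))"
    by (intro summable_norm_cancel[of "\<lambda>n. a n *\<^sub>R v (e n)"]) (simp add: summable_geometric)
  have "P {x} \<xi> \<noteq> 0" if x: "x \<in> \<Omega>" for x
  proof -
    have x_A: "{x} \<in> A" using atoms[OF x] ..
    define g where "g n = (if e n = x then a n else 0)" for n
    have "summable (\<lambda>n. (1/2)^n / norm (v x))"
      by (rule summable_divide) (simp add: summable_geometric)
    then have summable_g: "summable g"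
      by (rule summable_comparison_test'[where N = 0]) (simp add: g_def a_def)
    have "P {x} \<xi> = (\<Sum>n. P {x} (a n *\<^sub>R v (e n)))"
      unfolding \<xi>_def by (rule bounded_linear.suminf[OF bounded_linear_P[OF x_A] summable])
    also have "\<dots> = (\<Sum>n. g n *\<^sub>R v x)"
      by (intro arg_cong[where f = suminf] ext) (simp add: P_scaleR[OF x_A] P_v[OF e x] g_def)
    also have "\<dots> = (\<Sum>n. g n) *\<^sub>R v x"
      by (rule suminf_scaleR_left[OF summable_g, symmetric])
    finally have P_\<xi>: "P {x} \<xi> = (\<Sum>n. g n) *\<^sub>R v x" .
    obtain i where "e i = x"
      using x range_from_nat_into[OF False assms(1)] unfolding e_def by (metis rangeE)
    then have "0 < (\<Sum>n. g n)"
      using v[OF x] by (intro suminf_pos2[OF summable_g, where i = i]) (simp_all add: g_def a_def)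
    then show ?thesis using P_\<xi> v[OF x] by simp
  qed
  then show ?thesis by blast
qed

end

section \<open>Infinite paths and cylinder sets\<close>

definition diag_deg :: "nat \<Rightarrow> nat \<Rightarrow> nat \<Rightarrow> nat" where
  "diag_deg k n = (\<lambda>i. if i < k then n else 0)"

lemma zero_in_degs [simp]: "(\<lambda>_. 0) \<in> degs k"
  by (simp add: degs_def)

lemma diag_deg_in_degs [simp]: "diag_deg k n \<in> degs k"
  by (simp add: degs_def diag_deg_def)

lemma kpath_segment:
  assumes "x \<in> kpaths k L r s c d" "p \<in> degs k" "q \<in> degs k" "p \<le> q"
  shows "x p q \<in> L" "d (x p q) = (\<lambda>i. q i - p i)" "r (x p q) = x p p" "s (x p q) = x q q"
proof -
  have "\<forall>p\<in>degs k. \<forall>q\<in>degs k. p \<le> q \<longrightarrow>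
      x p q \<in> L \<and> d (x p q) = (\<lambda>i. q i - p i) \<and> r (x p q) = x p p \<and> s (x p q) = x q q"
    using assms(1) unfolding kpaths_def mem_Collect_eq by (elim conjE)
  then show "x p q \<in> L" "d (x p q) = (\<lambda>i. q i - p i)" "r (x p q) = x p p" "s (x p q) = x q q"
    using assms(2-4) by simp_all
qed

lemma kpath_undefined:
  assumes "x \<in> kpaths k L r s c d" "\<not> (p \<in> degs k \<and> q \<in> degs k \<and> p \<le> q)"
  shows "x p q = undefined"
proof -
  have "\<forall>p q. \<not> (p \<in> degs k \<and> q \<in> degs k \<and> p \<le> q) \<longrightarrow> x p q = undefined"
    using assms(1) unfolding kpaths_def mem_Collect_eq by (elim conjE)
  then show ?thesis using assms(2) by blast
qed

lemma kpath_segments_compose: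
  assumes "x \<in> kpaths k L r s c d" "p \<in> degs k" "q \<in> degs k" "w \<in> degs k" "p \<le> q" "q \<le> w"
  shows "s (x p q) = r (x q w)" "c (x p q) (x q w) = x p w"
proof -
  show "s (x p q) = r (x q w)"
    using kpath_segment(3,4)[OF assms(1,2,3,5)] kpath_segment(3,4)[OF assms(1,3,4,6)] by simp
  have "\<forall>p\<in>degs k. \<forall>q\<in>degs k. \<forall>w\<in>degs k. p \<le> q \<longrightarrow> q \<le> w \<longrightarrow> x p w = c (x p q) (x q w)"
    using assms(1) unfolding kpaths_def mem_Collect_eq by (elim conjE)
  then have "x p w = c (x p q) (x q w)" using assms(2-6) by blast
  then show "c (x p q) (x q w) = x p w" by (rule sym)
qed

lemma kgraph_factorization_unique:
  assumes "kgraph k L r s c d" "l \<in> L" "d l = (\<lambda>i. m i + n i)"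
    and "a \<in> L" "b \<in> L" "s a = r b" "c a b = l" "d a = m" "d b = n"
    and "a' \<in> L" "b' \<in> L" "s a' = r b'" "c a' b' = l" "d a' = m" "d b' = n"
  shows "a = a' \<and> b = b'"
proof -
  define Q where "Q p \<longleftrightarrow> fst p \<in> L \<and> snd p \<in> L \<and> s (fst p) = r (snd p) \<and>
      c (fst p) (snd p) = l \<and> d (fst p) = m \<and> d (snd p) = n" for p
  have "\<forall>l\<in>L. \<forall>m n. d l = (\<lambda>i. m i + n i) \<longrightarrow>
        (\<exists>!p. fst p \<in> L \<and> snd p \<in> L \<and> s (fst p) = r (snd p) \<and> c (fst p) (snd p) = l \<and>
              d (fst p) = m \<and> d (snd p) = n)"
    using assms(1) unfolding kgraph_def by (elim conjE)
  then have unique: "\<exists>!p. Q p" unfolding Q_def using assms(2,3) by simp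
  have "Q (a, b)" "Q (a', b')" unfolding Q_def using assms(4-) by simp_all
  then have "(a, b) = (a', b')"
    using the1_equality[OF unique] by metis
  then show ?thesis by simp
qed

lemma kpath_eq_subsegments:
  assumes kg: "kgraph k L r s c d" and x: "x \<in> kpaths k L r s c d" and y: "y \<in> kpaths k L r s c d"
    and deg: "p \<in> degs k" "q \<in> degs k" "w \<in> degs k" "p \<le> q" "q \<le> w"
    and eq: "y p w = x p w"
  shows "y p q = x p q \<and> y q w = x q w"
proof -
  have pw: "p \<le> w" using deg(4,5) by (rule order_trans)
  have "d (x p w) = (\<lambda>i. (q i - p i) + (w i - q i))"
  proof
    fix i
    have "p i \<le> q i" "q i \<le> w i" using deg(4,5) unfolding le_fun_def by auto
    then show "d (x p w) i = (q i - p i) + (w i - q i)"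
      using kpath_segment(2)[OF x deg(1,3) pw] by simp
  qed
  note X = kpath_segment[OF x deg(1,2,4)] kpath_segment[OF x deg(2,3,5)]
    kpath_segments_compose[OF x deg]
  note Y = kpath_segment[OF y deg(1,2,4)] kpath_segment[OF y deg(2,3,5)]
    kpath_segments_compose[OF y deg]
  have "c (y p q) (y q w) = x p w" using Y(10) eq by simp
  from kgraph_factorization_unique[OF kg kpath_segment(1)[OF x deg(1,3) pw] \<open>d (x p w) = _\<close>
      X(1,5,9,10,2,6) Y(1,5,9) this Y(2,6)]
  show ?thesis by simp
qed

lemma kpath_eq_initial_segment:
  assumes kg: "kgraph k L r s c d" and x: "x \<in> kpaths k L r s c d" and y: "y \<in> kpaths k L r s c d"
    and deg: "p \<in> degs k" "q \<in> degs k" "m \<in> degs k" "p \<le> q" "q \<le> m"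
    and eq: "y (\<lambda>_. 0) m = x (\<lambda>_. 0) m"
  shows "y p q = x p q"
proof -
  have zero: "(\<lambda>_. 0) \<le> p" "(\<lambda>_. 0) \<le> q" by (simp_all add: le_fun_def)
  have "y (\<lambda>_. 0) q = x (\<lambda>_. 0) q"
    using kpath_eq_subsegments[OF kg x y, of "\<lambda>_. 0" q m] deg(2,3,5) zero(2) eq by simp
  then show ?thesis
    using kpath_eq_subsegments[OF kg x y, of "\<lambda>_. 0" p q] deg(1,2,4) zero(1) by simp
qed

lemma initial_segment_in_L:
  assumes "x \<in> kpaths k L r s c d" "m \<in> degs k"
  shows "x (\<lambda>_. 0) m \<in> L"
proof -
  have "(\<lambda>_. 0) \<le> m" by (simp add: le_fun_def)
  then show ?thesis by (rule kpath_segment(1)[OF assms(1) zero_in_degs assms(2)])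
qed

lemma cylinder_initial_segment:
  assumes "x \<in> kpaths k L r s c d" "m \<in> degs k"
  shows "cylinder k L r s c d (x (\<lambda>_. 0) m) = {y \<in> kpaths k L r s c d. y (\<lambda>_. 0) m = x (\<lambda>_. 0) m}"
proof -
  have "d (x (\<lambda>_. 0) m) = m"
    using kpath_segment(2)[OF assms(1) zero_in_degs assms(2)] by (simp add: le_fun_def)
  then show ?thesis unfolding cylinder_def by simp
qed

lemma cylinder_initial_segment_antimono:
  assumes kg: "kgraph k L r s c d" and x: "x \<in> kpaths k L r s c d"
    and deg: "m \<in> degs k" "n \<in> degs k" "m \<le> n"
  shows "cylinder k L r s c d (x (\<lambda>_. 0) n) \<subseteq> cylinder k L r s c d (x (\<lambda>_. 0) m)"
proof
  fix y assume "y \<in> cylinder k L r s c d (x (\<lambda>_. 0) n)"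
  then have y: "y \<in> kpaths k L r s c d" "y (\<lambda>_. 0) n = x (\<lambda>_. 0) n"
    using cylinder_initial_segment[OF x deg(2)] by auto
  have "y (\<lambda>_. 0) m = x (\<lambda>_. 0) m"
    using kpath_eq_initial_segment[OF kg x y(1), of "\<lambda>_. 0" m n] deg y(2) by (simp add: le_fun_def)
  then show "y \<in> cylinder k L r s c d (x (\<lambda>_. 0) m)"
    using cylinder_initial_segment[OF x deg(1)] y(1) by simp
qed

lemma INT_cylinder_initial_segments:
  assumes kg: "kgraph k L r s c d" and x: "x \<in> kpaths k L r s c d"
  shows "(\<Inter>n. cylinder k L r s c d (x (\<lambda>_. 0) (diag_deg k n))) = {x}"
proof
  show "{x} \<subseteq> (\<Inter>n. cylinder k L r s c d (x (\<lambda>_. 0) (diag_deg k n)))"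
    using x by (simp add: cylinder_initial_segment)
  show "(\<Inter>n. cylinder k L r s c d (x (\<lambda>_. 0) (diag_deg k n))) \<subseteq> {x}"
  proof
    fix y assume y_in: "y \<in> (\<Inter>n. cylinder k L r s c d (x (\<lambda>_. 0) (diag_deg k n)))"
    then have y: "y \<in> kpaths k L r s c d" using cylinder_initial_segment[OF x] by auto
    have "y p q = x p q" for p q
    proof (cases "p \<in> degs k \<and> q \<in> degs k \<and> p \<le> q")
      case True
      define n where "n = (\<Sum>i<k. q i)"
      have "q \<le> diag_deg k n"
        unfolding le_fun_def diag_deg_def n_def
        using True by (auto simp: degs_def member_le_sum)
      moreover have "y (\<lambda>_. 0) (diag_deg k n) = x (\<lambda>_. 0) (diag_deg k n)"
        using y_in cylinder_initial_segment[OF x] by auto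
      ultimately show ?thesis
        using kpath_eq_initial_segment[OF kg x y, of p q "diag_deg k n"] True by simp
    next
      case False
      then show ?thesis
        using kpath_undefined[OF x False] kpath_undefined[OF y False] by simp
    qed
    then show "y \<in> {x}" by (auto intro!: ext)
  qed
qed

lemma sigma_algebra_kpath_borel: "sigma_algebra (kpaths k L r s c d) (kpath_borel k L r s c d)"
  unfolding kpath_borel_def by (rule sigma_algebra_sigma_sets) (auto simp: cylinder_def)

lemma cylinder_in_kpath_borel: "l \<in> L \<Longrightarrow> cylinder k L r s c d l \<in> kpath_borel k L r s c d"
  unfolding kpath_borel_def by (rule sigma_sets.Basic) auto

lemma singleton_in_kpath_borel:
  assumes kg: "kgraph k L r s c d" and x: "x \<in> kpaths k L r s c d"
  shows "{x} \<in> kpath_borel k L r s c d"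
proof -
  have "range (\<lambda>n. cylinder k L r s c d (x (\<lambda>_. 0) (diag_deg k n))) \<subseteq> kpath_borel k L r s c d"
    using x by (simp add: image_subset_iff cylinder_in_kpath_borel initial_segment_in_L)
  then have "(\<Inter>n. cylinder k L r s c d (x (\<lambda>_. 0) (diag_deg k n))) \<in> kpath_borel k L r s c d"
    by (rule sigma_algebra.countable_INT[OF sigma_algebra_kpath_borel]) simp
  then show ?thesis unfolding INT_cylinder_initial_segments[OF kg x] .
qed

section \<open>Atoms of a representation and cyclic vectors\<close>

locale kgraph_pvm =
  fixes k :: nat and L :: "'a set" and r s :: "'a \<Rightarrow> 'a" and c :: "'a \<Rightarrow> 'a \<Rightarrow> 'a"
    and d :: "'a \<Rightarrow> nat \<Rightarrow> nat"
    and P :: "((nat \<Rightarrow> nat) \<Rightarrow> (nat \<Rightarrow> nat) \<Rightarrow> 'a) set \<Rightarrow> 'h::chilbert_space \<Rightarrow> 'h"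
  assumes kgraph: "kgraph k L r s c d"
    and pvm_kpaths: "pvm (kpaths k L r s c d) (kpath_borel k L r s c d) P"
begin

sublocale pvm_space "kpaths k L r s c d" "kpath_borel k L r s c d" P
  by (rule pvm_space.intro[OF pvm_kpaths sigma_algebra_kpath_borel])

abbreviation cylinder_vectors :: "'h \<Rightarrow> 'h set" where
  "cylinder_vectors \<xi> \<equiv> {P (cylinder k L r s c d l) \<xi> | l. l \<in> L}"

lemma P_initial_cylinders_tendsto:
  assumes x: "x \<in> kpaths k L r s c d"
  shows "(\<lambda>n. P (cylinder k L r s c d (x (\<lambda>_. 0) (diag_deg k n))) h) \<longlonglongrightarrow> P {x} h"
proof -
  have "range (\<lambda>n. cylinder k L r s c d (x (\<lambda>_. 0) (diag_deg k n))) \<subseteq> kpath_borel k L r s c d"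
    using x by (simp add: image_subset_iff cylinder_in_kpath_borel initial_segment_in_L)
  moreover have "decseq (\<lambda>n. cylinder k L r s c d (x (\<lambda>_. 0) (diag_deg k n)))"
    unfolding decseq_def
  proof (intro allI impI)
    fix m n :: nat assume "m \<le> n"
    then have "diag_deg k m \<le> diag_deg k n" by (simp add: diag_deg_def le_fun_def)
    then show "cylinder k L r s c d (x (\<lambda>_. 0) (diag_deg k n))
        \<subseteq> cylinder k L r s c d (x (\<lambda>_. 0) (diag_deg k m))"
      by (rule cylinder_initial_segment_antimono[OF kgraph x diag_deg_in_degs diag_deg_in_degs])
  qed
  ultimately have "(\<lambda>n. P (cylinder k L r s c d (x (\<lambda>_. 0) (diag_deg k n))) h)
      \<longlonglongrightarrow> P (\<Inter>n. cylinder k L r s c d (x (\<lambda>_. 0) (diag_deg k n))) h"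
    by (rule P_decseq_tendsto)
  then show ?thesis unfolding INT_cylinder_initial_segments[OF kgraph x] .
qed

lemma P_singleton_P_cylinder:
  assumes x: "x \<in> kpaths k L r s c d" and l: "l \<in> L"
  shows "P {x} (P (cylinder k L r s c d l) h) = (if x \<in> cylinder k L r s c d l then P {x} h else 0)"
proof -
  have "P {x} (P (cylinder k L r s c d l) h) = P ({x} \<inter> cylinder k L r s c d l) h"
    by (rule P_Int[OF singleton_in_kpath_borel[OF kgraph x] cylinder_in_kpath_borel[OF l]])
  then show ?thesis by (cases "x \<in> cylinder k L r s c d l") simp_all
qed

lemma P_singleton_multiple_of_cyclic:
  assumes cyclic: "closure (cspan (cylinder_vectors \<xi>)) = UNIV" and x: "x \<in> kpaths k L r s c d"
  shows "\<exists>a. P {x} h = scaleC a (P {x} \<xi>)"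
proof -
  have "P {x} ` cylinder_vectors \<xi> \<subseteq> {scaleC a (P {x} \<xi>) | a. True}"
  proof
    fix v assume "v \<in> P {x} ` cylinder_vectors \<xi>"
    then obtain l where l: "l \<in> L" "v = P {x} (P (cylinder k L r s c d l) \<xi>)" by blast
    then have "v = scaleC (if x \<in> cylinder k L r s c d l then 1 else 0) (P {x} \<xi>)"
      by (simp add: P_singleton_P_cylinder[OF x l(1)] scaleC_one)
    then show "v \<in> {scaleC a (P {x} \<xi>) | a. True}" by blast
  qed
  then have "P {x} h \<in> {scaleC a (P {x} \<xi>) | a. True}"
    by (rule bounded_clinear_closure_cspan_into_line[OF
          bounded_clinear_P[OF singleton_in_kpath_borel[OF kgraph x]]]) (simp add: cyclic)
  then show ?thesis by blast
qed

lemma P_singleton_cyclic_nonzero: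
  assumes cyclic: "closure (cspan (cylinder_vectors \<xi>)) = UNIV" and x: "x \<in> kpaths k L r s c d"
    and atom: "P {x} \<noteq> zero_op"
  shows "P {x} \<xi> \<noteq> 0"
proof
  assume "P {x} \<xi> = 0"
  then have "P {x} h = 0" for h
    using P_singleton_multiple_of_cyclic[OF cyclic x, of h] by (metis scaleC_zero_right)
  then have "P {x} = zero_op" unfolding zero_op_def by (rule ext)
  with atom show False by contradiction
qed

lemma one_dimensional_range_P_singleton:
  assumes cyclic: "closure (cspan (cylinder_vectors \<xi>)) = UNIV" and x: "x \<in> kpaths k L r s c d"
    and atom: "P {x} \<noteq> zero_op"
  shows "one_dimensional (range (P {x}))"
  unfolding one_dimensional_def
proof (intro exI conjI)
  show "P {x} \<xi> \<noteq> 0" by (rule P_singleton_cyclic_nonzero[OF assms])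
  have x_A: "{x} \<in> kpath_borel k L r s c d" by (rule singleton_in_kpath_borel[OF kgraph x])
  show "range (P {x}) = {scaleC a (P {x} \<xi>) | a. True}"
  proof
    show "range (P {x}) \<subseteq> {scaleC a (P {x} \<xi>) | a. True}"
      using P_singleton_multiple_of_cyclic[OF cyclic x] by blast
    show "{scaleC a (P {x} \<xi>) | a. True} \<subseteq> range (P {x})"
    proof
      fix y assume "y \<in> {scaleC a (P {x} \<xi>) | a. True}"
      then obtain a where "y = scaleC a (P {x} \<xi>)" by blast
      then have "y = P {x} (scaleC a \<xi>)" by (simp add: P_scaleC[OF x_A])
      then show "y \<in> range (P {x})" by (rule range_eqI)
    qed
  qed
qed

lemma sum_P_singleton_in_closure_cspan:
  assumes "finite F" "F \<subseteq> kpaths k L r s c d"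
  shows "(\<Sum>x\<in>F. scaleC (\<alpha> x) (P {x} \<xi>)) \<in> closure (cspan (cylinder_vectors \<xi>))"
proof -
  define z where "z n = (\<Sum>x\<in>F. scaleC (\<alpha> x) (P (cylinder k L r s c d (x (\<lambda>_. 0) (diag_deg k n))) \<xi>))"
    for n
  have "z n \<in> cspan (cylinder_vectors \<xi>)" for n
    unfolding z_def
  proof (rule cspan_sum[OF assms(1)])
    fix x assume "x \<in> F"
    then have "x \<in> kpaths k L r s c d" by (rule subsetD[OF assms(2)])
    then have "x (\<lambda>_. 0) (diag_deg k n) \<in> L" using diag_deg_in_degs by (rule initial_segment_in_L)
    then show "P (cylinder k L r s c d (x (\<lambda>_. 0) (diag_deg k n))) \<xi> \<in> cylinder_vectors \<xi>"
      by blast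
  qed
  moreover have "z \<longlonglongrightarrow> (\<Sum>x\<in>F. scaleC (\<alpha> x) (P {x} \<xi>))"
    unfolding z_def
  proof (rule tendsto_sum)
    fix x assume "x \<in> F"
    then have "x \<in> kpaths k L r s c d" by (rule subsetD[OF assms(2)])
    then show "(\<lambda>n. scaleC (\<alpha> x) (P (cylinder k L r s c d (x (\<lambda>_. 0) (diag_deg k n))) \<xi>))
        \<longlonglongrightarrow> scaleC (\<alpha> x) (P {x} \<xi>)"
      by (rule bounded_linear.tendsto[OF bounded_linear_scaleC_right P_initial_cylinders_tendsto])
  qed
  ultimately show ?thesis unfolding closure_sequential by blast
qed

lemma in_closure_cspan_if_atomic_multiples:
  assumes sum: "((\<lambda>x. P {x} h) has_sum h) \<Omega>" and \<Omega>: "\<Omega> \<subseteq> kpaths k L r s c d"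
    and multiple: "\<And>x. x \<in> \<Omega> \<Longrightarrow> \<exists>\<alpha>. P {x} h = scaleC \<alpha> (P {x} \<xi>)"
  shows "h \<in> closure (cspan (cylinder_vectors \<xi>))"
proof (rule Lim_in_closed_set)
  show "closed (closure (cspan (cylinder_vectors \<xi>)))" by simp
  show "finite_subsets_at_top \<Omega> \<noteq> bot" by simp
  show "(sum (\<lambda>x. P {x} h) \<longlongrightarrow> h) (finite_subsets_at_top \<Omega>)"
    using sum unfolding has_sum_def .
  obtain \<alpha> where \<alpha>: "\<And>x. x \<in> \<Omega> \<Longrightarrow> P {x} h = scaleC (\<alpha> x) (P {x} \<xi>)"
    using multiple by metis
  show "\<forall>\<^sub>F F in finite_subsets_at_top \<Omega>. sum (\<lambda>x. P {x} h) F \<in> closure (cspan (cylinder_vectors \<xi>))"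
  proof (rule eventually_finite_subsets_at_top_weakI)
    fix F assume F: "finite F" "F \<subseteq> \<Omega>"
    have "sum (\<lambda>x. P {x} h) F = (\<Sum>x\<in>F. scaleC (\<alpha> x) (P {x} \<xi>))"
    proof (rule sum.cong)
      fix x assume "x \<in> F"
      then show "P {x} h = scaleC (\<alpha> x) (P {x} \<xi>)" by (rule \<alpha>[OF subsetD[OF F(2)]])
    qed simp
    also have "\<dots> \<in> closure (cspan (cylinder_vectors \<xi>))"
      using F \<Omega> by (simp add: sum_P_singleton_in_closure_cspan)
    finally show "sum (\<lambda>x. P {x} h) F \<in> closure (cspan (cylinder_vectors \<xi>))" .
  qed
qed

lemma cyclic_vector_exists:
  assumes atomic: "purely_atomic (kpaths k L r s c d) (kpath_borel k L r s c d) P"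
    and separable: "separable_hspace TYPE('h)"
    and one_dim: "\<forall>x\<in>kpaths k L r s c d. P {x} \<noteq> zero_op \<longrightarrow> one_dimensional (range (P {x}))"
  shows "\<exists>\<xi>. closure (cspan (cylinder_vectors \<xi>)) = UNIV"
proof -
  obtain \<Omega> where \<Omega>: "\<Omega> \<in> kpath_borel k L r s c d" "\<forall>x\<in>\<Omega>. P {x} \<noteq> zero_op"
    "\<And>h. ((\<lambda>x. P {x} h) has_sum h) \<Omega>"
    using atomic unfolding purely_atomic_def by blast
  have \<Omega>_kpaths: "\<Omega> \<subseteq> kpaths k L r s c d" using \<Omega>(1) by (rule sets_into_space)
  have atoms: "{x} \<in> kpath_borel k L r s c d \<and> P {x} \<noteq> zero_op" if "x \<in> \<Omega>" for x
    using singleton_in_kpath_borel[OF kgraph subsetD[OF \<Omega>_kpaths that]] \<Omega>(2) that by simp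
  obtain \<xi> where \<xi>: "\<forall>x\<in>\<Omega>. P {x} \<xi> \<noteq> 0"
    using exists_vector_nonzero_on_atoms[OF countable_atoms[OF separable atoms] atoms] by blast
  have "\<exists>\<alpha>. P {x} h = scaleC \<alpha> (P {x} \<xi>)" if x: "x \<in> \<Omega>" for x h
  proof (rule one_dimensional_multiple[of "range (P {x})"])
    show "one_dimensional (range (P {x}))" using one_dim \<Omega>_kpaths \<Omega>(2) x by blast
    show "P {x} \<xi> \<noteq> 0" using \<xi> x by blast
  qed simp_all
  then have "h \<in> closure (cspan (cylinder_vectors \<xi>))" for h
    using in_closure_cspan_if_atomic_multiples[OF \<Omega>(3) \<Omega>_kpaths] by blast
  then show ?thesis by blast
qed

lemma atomic_measure_vector_measure:
  assumes cyclic: "closure (cspan (cylinder_vectors \<xi>)) = UNIV"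
    and atomic: "purely_atomic (kpaths k L r s c d) (kpath_borel k L r s c d) P"
  shows "atomic_measure (vector_measure (kpaths k L r s c d) (kpath_borel k L r s c d) P \<xi>)"
proof -
  obtain \<Omega> where \<Omega>: "\<Omega> \<in> kpath_borel k L r s c d" "P (kpaths k L r s c d - \<Omega>) = zero_op"
    "\<forall>x\<in>\<Omega>. P {x} \<noteq> zero_op"
    using atomic unfolding purely_atomic_def by blast
  have "kpaths k L r s c d - \<Omega> \<in> kpath_borel k L r s c d" using \<Omega>(1) by (rule compl_sets)
  then have "emeasure (vector_measure (kpaths k L r s c d) (kpath_borel k L r s c d) P \<xi>)
      (kpaths k L r s c d - \<Omega>) = 0"
    using \<Omega>(2) by (simp add: emeasure_vector_measure zero_op_def)
  moreover have "{x} \<in> kpath_borel k L r s c d \<and>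
      emeasure (vector_measure (kpaths k L r s c d) (kpath_borel k L r s c d) P \<xi>) {x} \<noteq> 0"
    if "x \<in> \<Omega>" for x
  proof -
    have x: "x \<in> kpaths k L r s c d" using that sets_into_space[OF \<Omega>(1)] by blast
    have x_A: "{x} \<in> kpath_borel k L r s c d" by (rule singleton_in_kpath_borel[OF kgraph x])
    have "P {x} \<xi> \<noteq> 0" using P_singleton_cyclic_nonzero[OF cyclic x] \<Omega>(3) that by blast
    then show ?thesis using x_A by (simp add: emeasure_vector_measure)
  qed
  ultimately show ?thesis
    unfolding atomic_measure_def sets_vector_measure space_vector_measure using \<Omega>(1) by blast
qed

end

theorem theorem3p12:
  fixes k :: nat and L :: "'a set" and r s :: "'a \<Rightarrow> 'a" and c :: "'a \<Rightarrow> 'a \<Rightarrow> 'a"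
    and d :: "'a \<Rightarrow> nat \<Rightarrow> nat"
    and t :: "'a \<Rightarrow> 'h::chilbert_space \<Rightarrow> 'h"
    and P :: "((nat \<Rightarrow> nat) \<Rightarrow> (nat \<Rightarrow> nat) \<Rightarrow> 'a) set \<Rightarrow> 'h \<Rightarrow> 'h"
  assumes "kgraph k L r s c d"
    and "kgraph_finite k L d"
    and "no_sources k L r d"
    and "separable_hspace TYPE('h)"
    and "ck_rep k L r s c d t"
    and "pvm (kpaths k L r s c d) (kpath_borel k L r s c d) P"
    and "\<forall>l\<in>L. P (cylinder k L r s c d l) = t l \<circ> adj (t l)"
    and "purely_atomic (kpaths k L r s c d) (kpath_borel k L r s c d) P"
    and "\<forall>l\<in>L. t l \<circ> adj (t l) \<noteq> zero_op"
  shows "(monic_rep L t \<longleftrightarrow>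
           (\<forall>x\<in>kpaths k L r s c d. P {x} \<noteq> zero_op \<longrightarrow> one_dimensional (range (P {x}))))
         \<and> (monic_rep L t \<longrightarrow>
              (\<forall>\<xi>. cyclic_vector L t \<xi> \<longrightarrow>
                 atomic_measure (vector_measure (kpaths k L r s c d) (kpath_borel k L r s c d) P \<xi>)))"
proof -
  interpret kgraph_pvm k L r s c d P by (rule kgraph_pvm.intro[OF assms(1,6)])
  have "cylinder_vectors \<xi> = {t l (adj (t l) \<xi>) | l. l \<in> L}" for \<xi>
    using assms(7) by (metis comp_apply)
  then have cyclic_iff: "cyclic_vector L t \<xi> \<longleftrightarrow> closure (cspan (cylinder_vectors \<xi>)) = UNIV" for \<xi>
    unfolding cyclic_vector_def by simp
  have "\<forall>l\<in>L. t l \<noteq> zero_op"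
    using assms(9) by (auto simp: zero_op_def o_def)
  then have monic_iff: "monic_rep L t \<longleftrightarrow> (\<exists>\<xi>. closure (cspan (cylinder_vectors \<xi>)) = UNIV)"
    unfolding monic_rep_def cyclic_iff by blast
  show ?thesis
    unfolding monic_iff cyclic_iff
    using one_dimensional_range_P_singleton cyclic_vector_exists[OF assms(8,4)]
      atomic_measure_vector_measure[OF _ assms(8)]
    by blast
qed

end
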